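(* For no positive integer $m>1$ and no ordering of its elements is a quadratical quasigroup of order $m$ $(m-1)$-translatable.
   Context: A quadratical quasigroup is a quasigroup $(Q,\cdot)$ satisfying $xy\cdot x=zx\cdot yz$ for all $x,y,z$; equivalently, a groupoid satisfying $x\cdot x=x$, $yx\cdot xy=x$ and $xy\cdot zw=xz\cdot yw$. A finite groupoid with ordering $q_1,\dots,q_n$ of its elements is $k$-translatable ($1\le k<n$) with respect to this ordering if $q_i\cdot q_j=q_{i-1}\cdot q_{j-k}$ for all $i\in\{2,\dots,n\}$, $j\in\{1,\dots,n\}$, indices taken modulo $n$ in $\{1,\dots,n\}$. *)

theory Defs
  imports Main
begin

definition quasigroup :: "'a set \<Rightarrow> ('a \<Rightarrow> 'a \<Rightarrow> 'a) \<Rightarrow> bool" where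
  "quasigroup Q f \<longleftrightarrow>
     (\<forall>x\<in>Q. \<forall>y\<in>Q. f x y \<in> Q) \<and>
     (\<forall>a\<in>Q. \<forall>b\<in>Q. (\<exists>!x. x \<in> Q \<and> f a x = b) \<and> (\<exists>!y. y \<in> Q \<and> f y a = b))"

definition quadratical :: "'a set \<Rightarrow> ('a \<Rightarrow> 'a \<Rightarrow> 'a) \<Rightarrow> bool" where
  "quadratical Q f \<longleftrightarrow> quasigroup Q f \<and>
     (\<forall>x\<in>Q. \<forall>y\<in>Q. \<forall>z\<in>Q. f (f x y) x = f (f z x) (f y z))"

definition modidx :: "nat \<Rightarrow> int \<Rightarrow> nat" where
  "modidx n t = nat ((t - 1) mod int n) + 1"

definition translatable :: "'a set \<Rightarrow> ('a \<Rightarrow> 'a \<Rightarrow> 'a) \<Rightarrow> (nat \<Rightarrow> 'a) \<Rightarrow> nat \<Rightarrow> nat \<Rightarrow> bool" where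
  "translatable Q f q n k \<longleftrightarrow> 1 \<le> k \<and> k < n \<and>
     (\<forall>i\<in>{2..n}. \<forall>j\<in>{1..n}. f (q i) (q j) = f (q (i - 1)) (q (modidx n (int j - int k))))"

end

theory Submission
  imports Defs
begin

text \<open>Being $(m-1)$-translatable means $q_i q_j = q_{i-1} q_{j+1}$; sliding both indices
  until they are exchanged shows that the operation is commutative. The identity
  $xy \cdot x = zx \cdot yz$ with $y = z = x$ gives idempotence after cancelling $xx$, and
  with $y = x$ it gives $x = zx \cdot xz$, which under commutativity and idempotence reads
  $x = zx$. So $q_2 q_1 = q_1 = q_1 q_1$, and right cancellation forces $q_2 = q_1$,
  contradicting injectivity of the ordering.\<close>

lemma modidx_of_nat: "j \<in> {1..m} \<Longrightarrow> modidx m (int j) = j"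
  unfolding modidx_def by auto

lemma modidx_in_range: "m > 0 \<Longrightarrow> modidx m t \<in> {1..m}"
proof -
  assume "m > 0"
  then have "0 \<le> (t - 1) mod int m" "(t - 1) mod int m < int m" by simp_all
  then show ?thesis unfolding modidx_def by auto
qed

lemma modidx_minus_pred:
  assumes "m > 0"
  shows "modidx m (t - int (m - 1)) = modidx m (t + 1)"
proof -
  have "t - int (m - 1) - 1 = t - int m"
    using assms by (simp add: of_nat_diff)
  then show ?thesis
    unfolding modidx_def by simp
qed

lemma modidx_succ_modidx:
  assumes "m > 0"
  shows "modidx m (int (modidx m t) + 1) = modidx m (t + 1)"
  using assms by (simp add: modidx_def mod_simps algebra_simps)

lemma translatable_pred_step:
  assumes T: "translatable Q f q m (m - 1)"
    and i: "i \<in> {2..m}" and j: "j \<in> {1..m}"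
  shows "f (q i) (q j) = f (q (i - 1)) (q (modidx m (int j + 1)))"
proof -
  have "f (q i) (q j) = f (q (i - 1)) (q (modidx m (int j - int (m - 1))))"
    using T i j unfolding translatable_def by auto
  then show ?thesis
    using modidx_minus_pred[of m "int j"] j by simp
qed

lemma translatable_pred_shift:
  assumes T: "translatable Q f q m (m - 1)"
    and i: "i \<in> {1..m}" and j: "j \<in> {1..m}" and "d < i"
  shows "f (q i) (q j) = f (q (i - d)) (q (modidx m (int j + int d)))"
  using \<open>d < i\<close>
proof (induction d)
  case 0
  then show ?case using modidx_of_nat[OF j] by simp
next
  case (Suc d)
  have "m > 0" using i by simp
  have "f (q i) (q j) = f (q (i - d)) (q (modidx m (int j + int d)))"
    using Suc by simp
  also have "\<dots> = f (q (i - Suc d)) (q (modidx m (int (modidx m (int j + int d)) + 1)))"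
    using translatable_pred_step[OF T, of "i - d" "modidx m (int j + int d)"]
      Suc.prems i modidx_in_range[OF \<open>m > 0\<close>] by (simp add: le_diff_conv2)
  also have "\<dots> = f (q (i - Suc d)) (q (modidx m (int j + int (Suc d))))"
    using modidx_succ_modidx[OF \<open>m > 0\<close>] by (simp add: ac_simps)
  finally show ?case .
qed

lemma translatable_pred_commute:
  assumes T: "translatable Q f q m (m - 1)"
    and i: "i \<in> {1..m}" and j: "j \<in> {1..m}"
  shows "f (q i) (q j) = f (q j) (q i)"
proof -
  have swap: "f (q a) (q b) = f (q b) (q a)"
    if a: "a \<in> {1..m}" and b: "b \<in> {1..m}" and "b \<le> a" for a b
  proof -
    have "f (q a) (q b) = f (q (a - (a - b))) (q (modidx m (int b + int (a - b))))"
      using translatable_pred_shift[OF T a b, of "a - b"] b \<open>b \<le> a\<close> by simp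
    also have "\<dots> = f (q b) (q a)"
      using \<open>b \<le> a\<close> modidx_of_nat[OF a] by (simp add: of_nat_diff)
    finally show ?thesis .
  qed
  show ?thesis
    using swap[OF i j] swap[OF j i] by (cases "j \<le> i") auto
qed

lemma quasigroup_closed: "quasigroup Q f \<Longrightarrow> x \<in> Q \<Longrightarrow> y \<in> Q \<Longrightarrow> f x y \<in> Q"
  unfolding quasigroup_def by blast

lemma quasigroup_left_cancel:
  assumes qg: "quasigroup Q f" and "a \<in> Q" "x \<in> Q" "y \<in> Q" "f a x = f a y"
  shows "x = y"
proof -
  have "\<exists>!t. t \<in> Q \<and> f a t = f a y"
    using assms quasigroup_closed[OF qg] unfolding quasigroup_def by blast
  then show ?thesis using assms(3-5) by blast
qed

lemma quasigroup_right_cancel: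
  assumes qg: "quasigroup Q f" and "a \<in> Q" "x \<in> Q" "y \<in> Q" "f x a = f y a"
  shows "x = y"
proof -
  have "\<exists>!t. t \<in> Q \<and> f t a = f y a"
    using assms quasigroup_closed[OF qg] unfolding quasigroup_def by blast
  then show ?thesis using assms(3-5) by blast
qed

lemma quadratical_quasigroup: "quadratical Q f \<Longrightarrow> quasigroup Q f"
  unfolding quadratical_def by simp

lemma quadratical_identity:
  assumes "quadratical Q f" and "x \<in> Q" "y \<in> Q" "z \<in> Q"
  shows "f (f x y) x = f (f z x) (f y z)"
proof -
  have "\<forall>x\<in>Q. \<forall>y\<in>Q. \<forall>z\<in>Q. f (f x y) x = f (f z x) (f y z)"
    using assms(1) unfolding quadratical_def by (rule conjunct2)
  then show ?thesis using assms(2-4) by blast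
qed

lemma quadratical_idem:
  assumes Q: "quadratical Q f" and x: "x \<in> Q"
  shows "f x x = x"
proof -
  have qg: "quasigroup Q f" using Q by (rule quadratical_quasigroup)
  have "f (f x x) x = f (f x x) (f x x)"
    using quadratical_identity[OF Q x x x] .
  then have "x = f x x"
    by (rule quasigroup_left_cancel[OF qg quasigroup_closed[OF qg x x] x quasigroup_closed[OF qg x x]])
  then show ?thesis ..
qed

lemma quadratical_commutative_absorb:
  assumes Q: "quadratical Q f" and comm: "\<And>x y. x \<in> Q \<Longrightarrow> y \<in> Q \<Longrightarrow> f x y = f y x"
    and x: "x \<in> Q" and z: "z \<in> Q"
  shows "f z x = x"
proof -
  have "x = f (f z x) (f x z)"
    using quadratical_identity[OF Q x x z] by (simp only: quadratical_idem[OF Q x])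
  also have "\<dots> = f (f z x) (f z x)"
    by (simp only: comm[OF x z])
  also have "\<dots> = f z x"
    using quadratical_idem[OF Q quasigroup_closed[OF quadratical_quasigroup[OF Q] z x]] .
  finally show ?thesis ..
qed

theorem theorem8p5:
  fixes Q :: "'a set" and f :: "'a \<Rightarrow> 'a \<Rightarrow> 'a" and q :: "nat \<Rightarrow> 'a" and m :: nat
  assumes "m > 1" and "finite Q" and "card Q = m"
    and "quadratical Q f"
    and "bij_betw q {1..m} Q"
  shows "\<not> translatable Q f q m (m - 1)"
proof
  assume T: "translatable Q f q m (m - 1)"
  have Q_eq: "Q = q ` {1..m}" and inj: "inj_on q {1..m}"
    using assms(5) by (auto simp: bij_betw_def)
  have comm: "f x y = f y x" if "x \<in> Q" "y \<in> Q" for x y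
    using that translatable_pred_commute[OF T] Q_eq by auto
  have q1: "q 1 \<in> Q" and q2: "q 2 \<in> Q"
    using Q_eq assms(1) by auto
  have "f (q 2) (q 1) = f (q 1) (q 1)"
    using quadratical_commutative_absorb[OF assms(4) comm] q1 q2 by simp
  then have "q 2 = q 1"
    by (rule quasigroup_right_cancel[OF quadratical_quasigroup[OF assms(4)] q1 q2 q1])
  then show False
    using inj assms(1) unfolding inj_on_def by fastforce
qed

end
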